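(* Let $\tau$ be a distributive triangle function on $\Delta^+$, $\Sigma$ a ring of subsets of $\Omega\ne\emptyset$, $\gamma$ a $\tau$-decomposable measure on $\Sigma$ and $E\in\Sigma$. Let $f,g:\Omega\to[0,+\infty]$ be measurable functions that are $\gamma$-integrable on $E$. Then: (i) if $f\le g$, then $\int_E f\,d\gamma\ge\int_E g\,d\gamma$; (ii) for every $c\in[0,\infty)$, $\int_E c\cdot f\,d\gamma=c\odot\int_E f\,d\gamma$. (In particular these hold for simple functions.)
   Context: $\Delta^+$: functions $F:[-\infty,+\infty]\to[0,1]$ non-decreasing, left-continuous on $\mathbb{R}$, $F(x)=0$ for $x\le0$, $F(+\infty)=1$, ordered pointwise; $\varepsilon_0(x)=1$ if $x>0$, else $0$. Triangle function: symmetric, associative $\tau:\Delta^+\times\Delta^+\to\Delta^+$, non-decreasing in each variable, identity $\varepsilon_0$; $G\oplus H=\tau(G,H)$, $\bigoplus_{k=1}^nG_k=\tau(G_1,\bigoplus_{k=2}^nG_k)$. $c\odot G=\varepsilon_0$ if $c=0$, $(c\odot G)(x)=G(x/c)$ if $c>0$; $\tau$ distributive if $c\odot(G\oplus H)=(c\odot G)\oplus(c\odot H)$ for all $c\ge0$. $\tau$-decomposable measure: $\gamma:\Sigma\to\Delta^+$, $\gamma_\emptyset=\varepsilon_0$, $\gamma_{A\cup B}=\tau(\gamma_A,\gamma_B)$ for disjoint $A,B\in\Sigma$. Simple function $\sum_{i=1}^nx_i\chi_{E_i}$ ($x_i\in[0,\infty)$, $E_i\in\Sigma$ pairwise disjoint),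 $\int_Ef\,d\gamma=\bigoplus_ix_i\odot\gamma_{E\cap E_i}$. Measurable: pointwise limit of simple functions. $\mathcal S_{f,E}$: simple $\mathfrak f$ with $\mathfrak f(t)\le f(t)$ for $t\in E$. $f$ is $\gamma$-integrable on $E$ if some $H\in\Delta^+$ satisfies $\int_E\mathfrak f\,d\gamma\ge H$ for all $\mathfrak f\in\mathcal S_{f,E}$; then $\int_Ef\,d\gamma=\inf\{\int_E\mathfrak f\,d\gamma:\mathfrak f\in\mathcal S_{f,E}\}$, infimum in $(\Delta^+,\le)$ (left-continuous regularization of the pointwise infimum). *)

theory Defs
  imports "HOL-Analysis.Analysis"
begin

definition Delta_plus :: "(ereal \<Rightarrow> real) set" where
  "Delta_plus = {F. (\<forall>x. 0 \<le> F x \<and> F x \<le> 1) \<and> mono F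
     \<and> (\<forall>x::real. ((\<lambda>y. F (ereal y)) \<longlongrightarrow> F (ereal x)) (at_left x))
     \<and> (\<forall>x. x \<le> 0 \<longrightarrow> F x = 0) \<and> F \<infinity> = 1}"

definition eps0 :: "ereal \<Rightarrow> real" where
  "eps0 x = (if x > 0 then 1 else 0)"

definition triangle_function ::
  "((ereal \<Rightarrow> real) \<Rightarrow> (ereal \<Rightarrow> real) \<Rightarrow> (ereal \<Rightarrow> real)) \<Rightarrow> bool" where
  "triangle_function \<tau> \<longleftrightarrow>
     (\<forall>G\<in>Delta_plus. \<forall>H\<in>Delta_plus. \<tau> G H \<in> Delta_plus)
   \<and> (\<forall>G\<in>Delta_plus. \<forall>H\<in>Delta_plus. \<tau> G H = \<tau> H G)
   \<and> (\<forall>G\<in>Delta_plus. \<forall>H\<in>Delta_plus. \<forall>K\<in>Delta_plus. \<tau> G (\<tau> H K) = \<tau> (\<tau> G H) K)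
   \<and> (\<forall>G\<in>Delta_plus. \<forall>G'\<in>Delta_plus. \<forall>H\<in>Delta_plus. G \<le> G' \<longrightarrow> \<tau> G H \<le> \<tau> G' H)
   \<and> (\<forall>G\<in>Delta_plus. \<tau> G eps0 = G)"

text \<open>Scalar multiplication c \<odot> G (meant for c \<ge> 0).\<close>
definition smult_dist :: "real \<Rightarrow> (ereal \<Rightarrow> real) \<Rightarrow> (ereal \<Rightarrow> real)" where
  "smult_dist c G = (if c = 0 then eps0 else (\<lambda>x. G (x / ereal c)))"

definition distributive_tf ::
  "((ereal \<Rightarrow> real) \<Rightarrow> (ereal \<Rightarrow> real) \<Rightarrow> (ereal \<Rightarrow> real)) \<Rightarrow> bool" where
  "distributive_tf \<tau> \<longleftrightarrow> (\<forall>c\<ge>0. \<forall>G\<in>Delta_plus. \<forall>H\<in>Delta_plus.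
      smult_dist c (\<tau> G H) = \<tau> (smult_dist c G) (smult_dist c H))"

definition decomposable_measure ::
  "((ereal \<Rightarrow> real) \<Rightarrow> (ereal \<Rightarrow> real) \<Rightarrow> (ereal \<Rightarrow> real)) \<Rightarrow> 'a set set
     \<Rightarrow> ('a set \<Rightarrow> (ereal \<Rightarrow> real)) \<Rightarrow> bool" where
  "decomposable_measure \<tau> \<Sigma> \<gamma> \<longleftrightarrow>
     (\<forall>A\<in>\<Sigma>. \<gamma> A \<in> Delta_plus) \<and> \<gamma> {} = eps0
   \<and> (\<forall>A\<in>\<Sigma>. \<forall>B\<in>\<Sigma>. A \<inter> B = {} \<longrightarrow> \<gamma> (A \<union> B) = \<tau> (\<gamma> A) (\<gamma> B))"

definition simple_rep :: "'a set set \<Rightarrow> (real \<times> 'a set) list \<Rightarrow> bool" where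
  "simple_rep \<Sigma> rs \<longleftrightarrow> (\<forall>i<length rs. fst (rs!i) \<ge> 0 \<and> snd (rs!i) \<in> \<Sigma>)
     \<and> (\<forall>i<length rs. \<forall>j<length rs. i \<noteq> j \<longrightarrow> snd (rs!i) \<inter> snd (rs!j) = {})"

definition simple_fun_of :: "(real \<times> 'a set) list \<Rightarrow> 'a \<Rightarrow> ennreal" where
  "simple_fun_of rs t = (\<Sum>i<length rs. ennreal (fst (rs!i)) * indicator (snd (rs!i)) t)"

text \<open>Integral of a simple function given by a representation:
  \<oplus>_i x_i \<odot> \<gamma>_{E \<inter> E_i}, with \<oplus> of G_1..G_n = \<tau>(G_1, \<oplus> G_2..G_n).\<close>
definition simple_integral_rep ::
  "((ereal \<Rightarrow> real) \<Rightarrow> (ereal \<Rightarrow> real) \<Rightarrow> (ereal \<Rightarrow> real)) \<Rightarrow> ('a set \<Rightarrow> (ereal \<Rightarrow> real))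
     \<Rightarrow> 'a set \<Rightarrow> (real \<times> 'a set) list \<Rightarrow> (ereal \<Rightarrow> real)" where
  "simple_integral_rep \<tau> \<gamma> E rs =
     foldr \<tau> (map (\<lambda>(x, A). smult_dist x (\<gamma> (E \<inter> A))) rs) eps0"

definition is_simple :: "'a set \<Rightarrow> 'a set set \<Rightarrow> ('a \<Rightarrow> ennreal) \<Rightarrow> bool" where
  "is_simple \<Omega> \<Sigma> f \<longleftrightarrow> (\<exists>rs. simple_rep \<Sigma> rs \<and> (\<forall>t\<in>\<Omega>. f t = simple_fun_of rs t))"

definition measurable_fun :: "'a set \<Rightarrow> 'a set set \<Rightarrow> ('a \<Rightarrow> ennreal) \<Rightarrow> bool" where
  "measurable_fun \<Omega> \<Sigma> f \<longleftrightarrow> (\<exists>s :: nat \<Rightarrow> 'a \<Rightarrow> ennreal. (\<forall>n. is_simple \<Omega> \<Sigma> (s n))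
       \<and> (\<forall>t\<in>\<Omega>. (\<lambda>n. s n t) \<longlonglongrightarrow> f t))"

definition S_set :: "'a set set \<Rightarrow> ('a \<Rightarrow> ennreal) \<Rightarrow> 'a set \<Rightarrow> (real \<times> 'a set) list set" where
  "S_set \<Sigma> f E = {rs. simple_rep \<Sigma> rs \<and> (\<forall>t\<in>E. simple_fun_of rs t \<le> f t)}"

definition gamma_integrable ::
  "((ereal \<Rightarrow> real) \<Rightarrow> (ereal \<Rightarrow> real) \<Rightarrow> (ereal \<Rightarrow> real)) \<Rightarrow> 'a set set \<Rightarrow> ('a set \<Rightarrow> (ereal \<Rightarrow> real))
     \<Rightarrow> ('a \<Rightarrow> ennreal) \<Rightarrow> 'a set \<Rightarrow> bool" where
  "gamma_integrable \<tau> \<Sigma> \<gamma> f E \<longleftrightarrow>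
     (\<exists>H\<in>Delta_plus. \<forall>rs\<in>S_set \<Sigma> f E. H \<le> simple_integral_rep \<tau> \<gamma> E rs)"

text \<open>Infimum in (Delta-plus, \<le>): left-continuous regularisation of the pointwise infimum.\<close>
definition Inf_Delta :: "(ereal \<Rightarrow> real) set \<Rightarrow> (ereal \<Rightarrow> real)" where
  "Inf_Delta S x = (if x = \<infinity> then 1 else if x = -\<infinity> then 0 else
      (SUP y\<in>{y::real. ereal y < x}. Inf ((\<lambda>G. G (ereal y)) ` S)))"

definition gamma_integral ::
  "((ereal \<Rightarrow> real) \<Rightarrow> (ereal \<Rightarrow> real) \<Rightarrow> (ereal \<Rightarrow> real)) \<Rightarrow> 'a set set \<Rightarrow> ('a set \<Rightarrow> (ereal \<Rightarrow> real))
     \<Rightarrow> ('a \<Rightarrow> ennreal) \<Rightarrow> 'a set \<Rightarrow> (ereal \<Rightarrow> real)" where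
  "gamma_integral \<tau> \<Sigma> \<gamma> f E = Inf_Delta (simple_integral_rep \<tau> \<gamma> E ` S_set \<Sigma> f E)"

end

theory Submission
  imports Defs
begin

text \<open>Scaling a simple function by \<open>c > 0\<close> scales every coefficient of its representation,
  so \<open>S_{c f, E}\<close> is the image of \<open>S_{f, E}\<close>; distributivity of \<open>\<tau>\<close> then pulls \<open>c \<odot>\<close> out of
  every simple integral, and \<open>c \<odot>\<close> commutes with the infimum in \<open>\<Delta>\<^sup>+\<close> since it is just a
  reparametrisation of the argument. For \<open>c = 0\<close> every simple function below \<open>0\<close> only puts
  weight \<open>0\<close> on \<open>E\<close>, so all simple integrals equal \<open>\<epsilon>\<^sub>0\<close>. Monotonicity holds because
  \<open>f \<le> g\<close> gives \<open>S_{f,E} \<subseteq> S_{g,E}\<close>, and an infimum over a larger set is smaller.\<close>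

lemma eps0_in_Delta_plus: "eps0 \<in> Delta_plus"
proof -
  have "((\<lambda>y. eps0 (ereal y)) \<longlongrightarrow> eps0 (ereal x)) (at_left x)" for x :: real
  proof (rule tendsto_eventually)
    show "\<forall>\<^sub>F y in at_left x. eps0 (ereal y) = eps0 (ereal x)"
    proof (cases "x > 0")
      case True
      then show ?thesis
        using eventually_at_left_real[of 0 x] by (auto elim!: eventually_mono simp: eps0_def)
    qed (auto simp: eventually_at_filter eps0_def)
  qed
  moreover have "mono eps0" by (auto simp: mono_def eps0_def)
  ultimately show ?thesis unfolding Delta_plus_def by (auto simp: eps0_def)
qed

lemma ereal_divide_pos_iff: "(c::real) > 0 \<Longrightarrow> (y / ereal c > 0) = (y > 0)"
  by (cases y) (auto simp: zero_less_divide_iff)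

lemma smult_dist_eps0: "(c::real) \<ge> 0 \<Longrightarrow> smult_dist c eps0 = eps0"
  by (auto simp: smult_dist_def eps0_def fun_eq_iff ereal_divide_pos_iff)

lemma smult_dist_smult_dist:
  assumes "(c::real) > 0" "x \<ge> 0"
  shows "smult_dist c (smult_dist x G) = smult_dist (c * x) G"
proof (cases "x = 0")
  case True
  then show ?thesis using assms smult_dist_eps0[of c] by (simp add: smult_dist_def)
next
  case False
  have "y / ereal c / ereal x = y / ereal (c * x)" for y
    using assms False by (cases y) auto
  then show ?thesis using assms False by (simp add: smult_dist_def)
qed

lemma filterlim_divide_at_left:
  "(c::real) > 0 \<Longrightarrow> filterlim (\<lambda>y. y / c) (at_left (x / c)) (at_left x)"
  unfolding filterlim_at
  by (auto simp: eventually_at_filter divide_strict_right_mono intro!: tendsto_intros)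

lemma smult_dist_in_Delta_plus:
  assumes "(c::real) \<ge> 0" "G \<in> Delta_plus"
  shows "smult_dist c G \<in> Delta_plus"
proof (cases "c = 0")
  case True
  then show ?thesis by (simp add: smult_dist_def eps0_in_Delta_plus)
next
  case False
  with assms(1) have c: "c > 0" by simp
  have G: "\<forall>x. 0 \<le> G x \<and> G x \<le> 1" "mono G"
    "\<forall>x::real. ((\<lambda>y. G (ereal y)) \<longlongrightarrow> G (ereal x)) (at_left x)"
    "\<forall>x. x \<le> 0 \<longrightarrow> G x = 0" "G \<infinity> = 1"
    using assms(2) unfolding Delta_plus_def by auto
  have "mono (\<lambda>x. G (x / ereal c))"
    using G(2) c by (auto simp: mono_def ereal_divide_right_mono)
  moreover have "((\<lambda>y. G (ereal y / ereal c)) \<longlongrightarrow> G (ereal x / ereal c)) (at_left x)" for x :: real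
    using filterlim_compose[OF G(3)[rule_format, of "x / c"] filterlim_divide_at_left[OF c]] c
    by simp
  moreover have "x / ereal c \<le> 0" if "x \<le> 0" for x :: ereal
    using c that by (cases x) (auto simp: divide_nonpos_pos)
  ultimately show ?thesis
    using G c False unfolding Delta_plus_def smult_dist_def by auto
qed

lemma Inf_Delta_singleton_eps0: "Inf_Delta {eps0} = eps0"
proof
  fix x :: ereal
  show "Inf_Delta {eps0} x = eps0 x"
  proof (cases x)
    case (real r)
    have "(SUP y\<in>{y. ereal y < ereal r}. eps0 (ereal y)) = eps0 (ereal r)"
    proof (cases "r > 0")
      case True
      then show ?thesis unfolding image_def
        by (intro cSup_eq_maximum) (auto simp: eps0_def intro!: exI[of _ "r / 2"])
    next
      case False
      then show ?thesis unfolding image_def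
        by (intro cSup_eq_maximum) (auto simp: eps0_def intro!: exI[of _ "r - 1"])
    qed
    then show ?thesis using real by (simp add: Inf_Delta_def)
  qed (auto simp: Inf_Delta_def eps0_def)
qed

lemma Inf_Delta_smult_dist:
  assumes c: "(c::real) > 0"
  shows "Inf_Delta (smult_dist c ` S) = smult_dist c (Inf_Delta S)"
proof
  fix x :: ereal
  show "Inf_Delta (smult_dist c ` S) x = smult_dist c (Inf_Delta S) x"
  proof (cases x)
    case (real r)
    have below: "{y. ereal y < ereal (r / c)} = (\<lambda>y. y / c) ` {y. ereal y < ereal r}"
    proof safe
      fix y assume "ereal y < ereal (r / c)"
      with c have "y * c < r" by (simp add: pos_less_divide_eq)
      with c show "y \<in> (\<lambda>y. y / c) ` {y. ereal y < ereal r}"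
        by (intro image_eqI[of _ _ "y * c"]) auto
    qed (use c in \<open>auto simp: divide_strict_right_mono\<close>)
    have "Inf_Delta (smult_dist c ` S) x
        = (SUP y\<in>{y. ereal y < ereal r}. Inf ((\<lambda>G. G (ereal (y / c))) ` S))"
      using c real by (simp add: Inf_Delta_def smult_dist_def image_image)
    also have "\<dots> = (SUP y\<in>{y. ereal y < ereal (r / c)}. Inf ((\<lambda>G. G (ereal y)) ` S))"
      unfolding below image_image by simp
    also have "\<dots> = smult_dist c (Inf_Delta S) x"
      using c real by (simp add: Inf_Delta_def smult_dist_def)
    finally show ?thesis .
  qed (use c in \<open>auto simp: Inf_Delta_def smult_dist_def\<close>)
qed

lemma Inf_Delta_antimono:
  assumes "S \<subseteq> T" "S \<noteq> {}" "S \<subseteq> Delta_plus" "\<forall>G\<in>T. H \<le> G"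
  shows "Inf_Delta T \<le> Inf_Delta S"
proof (rule le_funI)
  fix x :: ereal
  have bdd_T: "bdd_below ((\<lambda>G. G (ereal y)) ` T)" for y
    using assms(4) unfolding bdd_below_def le_fun_def by blast
  have bdd_S: "bdd_below ((\<lambda>G. G (ereal y)) ` S)" for y
    using bdd_T[of y] assms(1) by (meson bdd_below_mono image_mono)
  have "Inf ((\<lambda>G. G (ereal y)) ` S) \<le> 1" for y
  proof -
    obtain G where "G \<in> S" using assms(2) by blast
    then have "Inf ((\<lambda>G. G (ereal y)) ` S) \<le> G (ereal y)"
      using bdd_S by (intro cInf_lower) auto
    also have "\<dots> \<le> 1" using \<open>G \<in> S\<close> assms(3) by (auto simp: Delta_plus_def)
    finally show ?thesis .
  qed
  then have "(SUP y\<in>{y. ereal y < x}. Inf ((\<lambda>G. G (ereal y)) ` T))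
      \<le> (SUP y\<in>{y. ereal y < x}. Inf ((\<lambda>G. G (ereal y)) ` S))" if "x = ereal r" for r
  proof (intro cSUP_mono)
    show "{y. ereal y < x} \<noteq> {}" using that by (auto intro!: exI[of _ "r - 1"])
  next
    fix y
    show "\<exists>y'\<in>{y. ereal y < x}. Inf ((\<lambda>G. G (ereal y)) ` T) \<le> Inf ((\<lambda>G. G (ereal y')) ` S)"
      if "y \<in> {y. ereal y < x}"
      using that assms(1,2) bdd_T[of y] by (intro bexI[of _ y] cInf_superset_mono) auto
  qed (auto simp: bdd_above_def)
  then show "Inf_Delta T x \<le> Inf_Delta S x"
    by (cases x) (auto simp: Inf_Delta_def)
qed

lemma simple_integral_rep_in_Delta_plus:
  assumes "triangle_function \<tau>"
  shows "\<forall>(x, A)\<in>set rs. x \<ge> 0 \<and> \<gamma> (E \<inter> A) \<in> Delta_plus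
    \<Longrightarrow> simple_integral_rep \<tau> \<gamma> E rs \<in> Delta_plus"
proof (induction rs)
  case (Cons xA rs)
  obtain x A where xA: "xA = (x, A)" by fastforce
  have "smult_dist x (\<gamma> (E \<inter> A)) \<in> Delta_plus"
    using Cons.prems xA smult_dist_in_Delta_plus by auto
  moreover have "simple_integral_rep \<tau> \<gamma> E rs \<in> Delta_plus" using Cons by auto
  ultimately show ?case
    using assms xA unfolding triangle_function_def by (simp add: simple_integral_rep_def)
qed (simp add: simple_integral_rep_def eps0_in_Delta_plus)

lemma simple_integral_rep_smult:
  assumes "triangle_function \<tau>" "distributive_tf \<tau>" "(c::real) > 0"
  shows "\<forall>(x, A)\<in>set rs. x \<ge> 0 \<and> \<gamma> (E \<inter> A) \<in> Delta_plus
    \<Longrightarrow> simple_integral_rep \<tau> \<gamma> E (map (\<lambda>(x, A). (c * x, A)) rs)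
      = smult_dist c (simple_integral_rep \<tau> \<gamma> E rs)"
proof (induction rs)
  case Nil
  then show ?case using assms(3) by (simp add: simple_integral_rep_def smult_dist_eps0)
next
  case (Cons xA rs)
  obtain x A where xA: "xA = (x, A)" by fastforce
  let ?G = "smult_dist x (\<gamma> (E \<inter> A))" and ?I = "simple_integral_rep \<tau> \<gamma> E rs"
  have "?G \<in> Delta_plus" using Cons.prems xA smult_dist_in_Delta_plus by auto
  moreover have "?I \<in> Delta_plus"
    using Cons.prems simple_integral_rep_in_Delta_plus[OF assms(1)] by auto
  ultimately have "smult_dist c (\<tau> ?G ?I) = \<tau> (smult_dist c ?G) (smult_dist c ?I)"
    using assms(2,3) unfolding distributive_tf_def by auto
  then show ?case
    using Cons xA assms(3) by (simp add: simple_integral_rep_def smult_dist_smult_dist)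
qed

lemma simple_integral_rep_eq_eps0:
  assumes "triangle_function \<tau>" "\<forall>(x, A)\<in>set rs. smult_dist x (\<gamma> (E \<inter> A)) = eps0"
  shows "simple_integral_rep \<tau> \<gamma> E rs = eps0"
proof -
  have "\<tau> eps0 eps0 = eps0"
    using assms(1) eps0_in_Delta_plus by (simp add: triangle_function_def)
  then show ?thesis using assms(2)
    by (induction rs) (auto simp: simple_integral_rep_def)
qed

lemma Nil_in_S_set: "[] \<in> S_set \<Sigma> f E"
  by (simp add: S_set_def simple_rep_def simple_fun_of_def)

lemma simple_integral_rep_Nil: "simple_integral_rep \<tau> \<gamma> E [] = eps0"
  by (simp add: simple_integral_rep_def)

lemma simple_rep_set:
  "simple_rep \<Sigma> rs \<Longrightarrow> (x, A) \<in> set rs \<Longrightarrow> x \<ge> 0 \<and> A \<in> \<Sigma>"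
  unfolding simple_rep_def in_set_conv_nth by (metis fst_conv snd_conv)

lemma simple_integral_rep_in_Delta_plus_S_set:
  assumes "triangle_function \<tau>" "ring_of_sets \<Omega> \<Sigma>" "decomposable_measure \<tau> \<Sigma> \<gamma>"
    "E \<in> \<Sigma>" "rs \<in> S_set \<Sigma> f E"
  shows "\<forall>(x, A)\<in>set rs. x \<ge> 0 \<and> \<gamma> (E \<inter> A) \<in> Delta_plus"
    and "simple_integral_rep \<tau> \<gamma> E rs \<in> Delta_plus"
proof -
  show "\<forall>(x, A)\<in>set rs. x \<ge> 0 \<and> \<gamma> (E \<inter> A) \<in> Delta_plus"
    using assms(2-5) simple_rep_set[of \<Sigma> rs]
    by (auto simp: S_set_def decomposable_measure_def
        intro: semiring_of_sets.Int[OF ring_of_sets.axioms(1)])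
  then show "simple_integral_rep \<tau> \<gamma> E rs \<in> Delta_plus"
    by (rule simple_integral_rep_in_Delta_plus[OF assms(1)])
qed

lemma simple_fun_of_smult:
  "(c::real) \<ge> 0 \<Longrightarrow>
    simple_fun_of (map (\<lambda>(x, A). (c * x, A)) rs) t = ennreal c * simple_fun_of rs t"
  unfolding simple_fun_of_def sum_distrib_left
  by (intro sum.cong) (auto simp: ennreal_mult' case_prod_unfold mult.assoc)

lemma simple_rep_smult:
  "(c::real) > 0 \<Longrightarrow> simple_rep \<Sigma> (map (\<lambda>(x, A). (c * x, A)) rs) = simple_rep \<Sigma> rs"
  unfolding simple_rep_def by (simp add: case_prod_unfold zero_le_mult_iff)

lemma S_set_smult:
  assumes c: "(c::real) > 0"
  shows "S_set \<Sigma> (\<lambda>t. ennreal c * f t) E = map (\<lambda>(x, A). (c * x, A)) ` S_set \<Sigma> f E"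
proof safe
  fix rs assume rs: "rs \<in> S_set \<Sigma> (\<lambda>t. ennreal c * f t) E"
  let ?rs = "map (\<lambda>(x, A). (x / c, A)) rs"
  have scaled: "map (\<lambda>(x, A). (c * x, A)) ?rs = rs" using c by (induction rs) auto
  have "simple_rep \<Sigma> ?rs"
    using rs simple_rep_smult[OF c, of \<Sigma> ?rs] unfolding scaled by (simp add: S_set_def)
  moreover have "\<forall>t\<in>E. simple_fun_of ?rs t \<le> f t"
    using rs simple_fun_of_smult[of c ?rs] c unfolding scaled
    by (auto simp: S_set_def ennreal_mult_le_mult_iff)
  ultimately have "?rs \<in> S_set \<Sigma> f E" by (simp add: S_set_def)
  with scaled show "rs \<in> map (\<lambda>(x, A). (c * x, A)) ` S_set \<Sigma> f E" by force
next
  fix rs assume "rs \<in> S_set \<Sigma> f E"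
  then show "map (\<lambda>(x, A). (c * x, A)) rs \<in> S_set \<Sigma> (\<lambda>t. ennreal c * f t) E"
    using c simple_rep_smult simple_fun_of_smult[of c rs]
    by (auto simp: S_set_def intro: mult_left_mono)
qed

lemma simple_integral_rep_S_set_zero:
  assumes "triangle_function \<tau>" "decomposable_measure \<tau> \<Sigma> \<gamma>"
    and rs: "rs \<in> S_set \<Sigma> (\<lambda>_. 0) E"
  shows "simple_integral_rep \<tau> \<gamma> E rs = eps0"
proof (rule simple_integral_rep_eq_eps0[OF assms(1)], safe)
  fix x A assume xA: "(x, A) \<in> set rs"
  then obtain i where i: "i < length rs" "rs ! i = (x, A)" by (auto simp: in_set_conv_nth)
  have x: "x \<ge> 0" using rs xA simple_rep_set[of \<Sigma> rs] by (auto simp: S_set_def)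
  show "smult_dist x (\<gamma> (E \<inter> A)) = eps0"
  proof (cases "x = 0")
    case False
    have "E \<inter> A = {}"
    proof (rule ccontr)
      assume "E \<inter> A \<noteq> {}"
      then obtain t where t: "t \<in> E" "t \<in> A" by auto
      have "ennreal (fst (rs ! i)) * indicator (snd (rs ! i)) t \<le> simple_fun_of rs t"
        unfolding simple_fun_of_def using i by (intro member_le_sum) auto
      also have "\<dots> \<le> 0" using t rs by (simp add: S_set_def)
      finally have "ennreal x \<le> 0" using i t by simp
      with False x show False by simp
    qed
    then show ?thesis using assms(2) x smult_dist_eps0[of x] by (simp add: decomposable_measure_def)
  qed (simp add: smult_dist_def)
qed

lemma gamma_integral_antimono:
  assumes "triangle_function \<tau>" "ring_of_sets \<Omega> \<Sigma>" "decomposable_measure \<tau> \<Sigma> \<gamma>"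
    "E \<in> \<Sigma>" "gamma_integrable \<tau> \<Sigma> \<gamma> g E" "\<forall>t\<in>E. f t \<le> g t"
  shows "gamma_integral \<tau> \<Sigma> \<gamma> g E \<le> gamma_integral \<tau> \<Sigma> \<gamma> f E"
proof -
  obtain H where H: "\<forall>rs\<in>S_set \<Sigma> g E. H \<le> simple_integral_rep \<tau> \<gamma> E rs"
    using assms(5) unfolding gamma_integrable_def by blast
  have "S_set \<Sigma> f E \<subseteq> S_set \<Sigma> g E"
    using assms(6) unfolding S_set_def by (auto intro: order_trans)
  then have "simple_integral_rep \<tau> \<gamma> E ` S_set \<Sigma> f E \<subseteq> simple_integral_rep \<tau> \<gamma> E ` S_set \<Sigma> g E"
    by (rule image_mono)
  moreover have "simple_integral_rep \<tau> \<gamma> E ` S_set \<Sigma> f E \<noteq> {}"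
    using Nil_in_S_set by blast
  moreover have "simple_integral_rep \<tau> \<gamma> E ` S_set \<Sigma> f E \<subseteq> Delta_plus"
    using simple_integral_rep_in_Delta_plus_S_set(2)[OF assms(1-4)] by blast
  moreover have "\<forall>G\<in>simple_integral_rep \<tau> \<gamma> E ` S_set \<Sigma> g E. H \<le> G"
    using H by blast
  ultimately show ?thesis
    unfolding gamma_integral_def by (rule Inf_Delta_antimono)
qed

lemma gamma_integral_zero:
  assumes "triangle_function \<tau>" "decomposable_measure \<tau> \<Sigma> \<gamma>"
  shows "gamma_integrable \<tau> \<Sigma> \<gamma> (\<lambda>_. 0) E" "gamma_integral \<tau> \<Sigma> \<gamma> (\<lambda>_. 0) E = eps0"
proof -
  have image: "simple_integral_rep \<tau> \<gamma> E ` S_set \<Sigma> (\<lambda>_. 0) E = {eps0}"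
  proof (intro equalityI)
    show "{eps0} \<subseteq> simple_integral_rep \<tau> \<gamma> E ` S_set \<Sigma> (\<lambda>_. 0) E"
      using Nil_in_S_set by (force simp: simple_integral_rep_Nil)
  qed (auto dest: simple_integral_rep_S_set_zero[OF assms])
  show "gamma_integrable \<tau> \<Sigma> \<gamma> (\<lambda>_. 0) E"
    unfolding gamma_integrable_def using eps0_in_Delta_plus simple_integral_rep_S_set_zero[OF assms]
    by (auto intro!: bexI[of _ eps0])
  show "gamma_integral \<tau> \<Sigma> \<gamma> (\<lambda>_. 0) E = eps0"
    unfolding gamma_integral_def image by (rule Inf_Delta_singleton_eps0)
qed

lemma gamma_integral_smult:
  assumes "triangle_function \<tau>" "distributive_tf \<tau>" "ring_of_sets \<Omega> \<Sigma>"
    "decomposable_measure \<tau> \<Sigma> \<gamma>" "E \<in> \<Sigma>" "gamma_integrable \<tau> \<Sigma> \<gamma> f E" "(c::real) > 0"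
  shows "gamma_integrable \<tau> \<Sigma> \<gamma> (\<lambda>t. ennreal c * f t) E"
    and "gamma_integral \<tau> \<Sigma> \<gamma> (\<lambda>t. ennreal c * f t) E = smult_dist c (gamma_integral \<tau> \<Sigma> \<gamma> f E)"
proof -
  let ?I = "simple_integral_rep \<tau> \<gamma> E"
  have "?I (map (\<lambda>(x, A). (c * x, A)) rs) = smult_dist c (?I rs)" if "rs \<in> S_set \<Sigma> f E" for rs
    using simple_integral_rep_smult[OF assms(1,2,7)]
      simple_integral_rep_in_Delta_plus_S_set(1)[OF assms(1,3-5) that] by blast
  then have image: "?I ` S_set \<Sigma> (\<lambda>t. ennreal c * f t) E = smult_dist c ` ?I ` S_set \<Sigma> f E"
    unfolding S_set_smult[OF assms(7)] image_image by (auto simp: image_iff)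
  obtain H where H: "H \<in> Delta_plus" "\<forall>rs\<in>S_set \<Sigma> f E. H \<le> ?I rs"
    using assms(6) unfolding gamma_integrable_def by blast
  have "smult_dist c H \<le> smult_dist c G" if "H \<le> G" for G
    using that assms(7) by (auto simp: smult_dist_def le_fun_def)
  then have "\<forall>G\<in>?I ` S_set \<Sigma> (\<lambda>t. ennreal c * f t) E. smult_dist c H \<le> G"
    unfolding image using H(2) by auto
  then show "gamma_integrable \<tau> \<Sigma> \<gamma> (\<lambda>t. ennreal c * f t) E"
    unfolding gamma_integrable_def
    using smult_dist_in_Delta_plus[OF less_imp_le[OF assms(7)] H(1)] by blast
  show "gamma_integral \<tau> \<Sigma> \<gamma> (\<lambda>t. ennreal c * f t) E = smult_dist c (gamma_integral \<tau> \<Sigma> \<gamma> f E)"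
    unfolding gamma_integral_def image Inf_Delta_smult_dist[OF assms(7)] ..
qed

theorem theorem4p7:
  fixes \<tau> :: "(ereal \<Rightarrow> real) \<Rightarrow> (ereal \<Rightarrow> real) \<Rightarrow> (ereal \<Rightarrow> real)"
    and \<Omega> :: "'a set" and \<Sigma> :: "'a set set" and \<gamma> :: "'a set \<Rightarrow> (ereal \<Rightarrow> real)"
    and E :: "'a set" and f g :: "'a \<Rightarrow> ennreal"
  assumes "triangle_function \<tau>" and "distributive_tf \<tau>"
    and "\<Omega> \<noteq> {}" and "ring_of_sets \<Omega> \<Sigma>"
    and "decomposable_measure \<tau> \<Sigma> \<gamma>" and "E \<in> \<Sigma>"
    and "measurable_fun \<Omega> \<Sigma> f" and "measurable_fun \<Omega> \<Sigma> g"
    and "gamma_integrable \<tau> \<Sigma> \<gamma> f E" and "gamma_integrable \<tau> \<Sigma> \<gamma> g E"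
  shows "((\<forall>t\<in>\<Omega>. f t \<le> g t) \<longrightarrow> gamma_integral \<tau> \<Sigma> \<gamma> g E \<le> gamma_integral \<tau> \<Sigma> \<gamma> f E)
       \<and> (\<forall>c::real. c \<ge> 0 \<longrightarrow>
            gamma_integrable \<tau> \<Sigma> \<gamma> (\<lambda>t. ennreal c * f t) E
          \<and> gamma_integral \<tau> \<Sigma> \<gamma> (\<lambda>t. ennreal c * f t) E = smult_dist c (gamma_integral \<tau> \<Sigma> \<gamma> f E))"
proof (intro conjI impI allI)
  have "E \<subseteq> \<Omega>"
    using assms(4,6) by (meson ring_of_sets.axioms(1) semiring_of_sets_def subset_class.sets_into_space)
  then show "gamma_integral \<tau> \<Sigma> \<gamma> g E \<le> gamma_integral \<tau> \<Sigma> \<gamma> f E" if "\<forall>t\<in>\<Omega>. f t \<le> g t"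
    using that gamma_integral_antimono[OF assms(1,4-6,10)] by blast
  fix c :: real
  assume "c \<ge> 0"
  then consider "c = 0" | "c > 0" by linarith
  then show "gamma_integrable \<tau> \<Sigma> \<gamma> (\<lambda>t. ennreal c * f t) E"
    and "gamma_integral \<tau> \<Sigma> \<gamma> (\<lambda>t. ennreal c * f t) E = smult_dist c (gamma_integral \<tau> \<Sigma> \<gamma> f E)"
    by (cases; simp add: gamma_integral_zero[OF assms(1,5)] gamma_integral_smult[OF assms(1,2,4-6,9)]
        smult_dist_def)+
qed

end
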